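(* Let $g\in C(S^{n-1})$ be a continuous non-negative function on the sphere $S^{n-1}$, and let $U(x)\equiv|x|\,g\big(\frac{x}{|x|}\big)$ be its extension to a function on $\mathbb{R}^n$ homogeneous of degree $1$. Then $U$ is convex on $\mathbb{R}^n$ if and only if $\mathrm{Hess}\,g+gI\ge0$ on $S^{n-1}$ in the viscosity sense.
   Context: $\mathrm{Hess}\,g$ is the Riemannian Hessian on the round unit sphere and $I$ the identity (metric) on $TS^{n-1}$. The viscosity inequality means: for every $\sigma\in S^{n-1}$ and every $C^2$ function $\psi$ near $\sigma$ with $g\le\psi$ near $\sigma$ and $g(\sigma)=\psi(\sigma)$, one has $\mathrm{Hess}_\sigma\psi+\psi(\sigma)I\ge0$ as a quadratic form on $T_\sigma S^{n-1}$. ($U(0)=0$.) *)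

theory Defs
  imports "HOL-Analysis.Analysis"
begin

definition C2_on :: "'a::euclidean_space set \<Rightarrow> ('a \<Rightarrow> real) \<Rightarrow> bool" where
  "C2_on W F \<longleftrightarrow> (\<exists>(D :: 'a \<Rightarrow> 'a \<Rightarrow>\<^sub>L real) (D2 :: 'a \<Rightarrow> 'a \<Rightarrow>\<^sub>L ('a \<Rightarrow>\<^sub>L real)).
      (\<forall>x\<in>W. (F has_derivative blinfun_apply (D x)) (at x)) \<and>
      (\<forall>x\<in>W. (D has_derivative blinfun_apply (D2 x)) (at x)) \<and>
      continuous_on W D2)"

text \<open>A function on the unit sphere is C^2 near sigma: it agrees, on the sphere near sigma,
  with a C^2 function on an open neighbourhood of sigma in the ambient space
  (the sphere being an embedded submanifold).\<close>
definition C2_near_on_sphere :: "('a::euclidean_space \<Rightarrow> real) \<Rightarrow> 'a \<Rightarrow> bool" where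
  "C2_near_on_sphere \<psi> \<sigma> \<longleftrightarrow>
     (\<exists>W F. open W \<and> \<sigma> \<in> W \<and> C2_on W F \<and> (\<forall>x\<in>W \<inter> sphere 0 1. F x = \<psi> x))"

text \<open>Exponential map of the round unit sphere at sigma, applied to t*v (v tangent at sigma).\<close>
definition sphere_exp :: "'a::euclidean_space \<Rightarrow> 'a \<Rightarrow> real \<Rightarrow> 'a" where
  "sphere_exp \<sigma> v t = cos (t * norm v) *\<^sub>R \<sigma> + sin (t * norm v) *\<^sub>R (v /\<^sub>R norm v)"

text \<open>Riemannian Hessian quadratic form Hess_sigma psi (v,v) on the round sphere:
  second derivative of psi along the geodesic t \<mapsto> exp_sigma(t v) at t = 0.\<close>
definition sphere_hess :: "('a::euclidean_space \<Rightarrow> real) \<Rightarrow> 'a \<Rightarrow> 'a \<Rightarrow> real" where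
  "sphere_hess \<psi> \<sigma> v = deriv (deriv (\<lambda>t. \<psi> (sphere_exp \<sigma> v t))) 0"

definition viscosity_hess_plus_id_nonneg :: "('a::euclidean_space \<Rightarrow> real) \<Rightarrow> bool" where
  "viscosity_hess_plus_id_nonneg g \<longleftrightarrow>
     (\<forall>\<sigma>\<in>sphere 0 1. \<forall>\<psi>. C2_near_on_sphere \<psi> \<sigma> \<and>
        (\<exists>e>0. \<forall>\<tau>\<in>sphere 0 1. dist \<tau> \<sigma> < e \<longrightarrow> g \<tau> \<le> \<psi> \<tau>) \<and> g \<sigma> = \<psi> \<sigma>
        \<longrightarrow> (\<forall>v. v \<bullet> \<sigma> = 0 \<longrightarrow> sphere_hess \<psi> \<sigma> v + \<psi> \<sigma> * (norm v)\<^sup>2 \<ge> 0))"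

end

(*
  A function U positively homogeneous of degree 1 is convex iff it is convex along every line;
  lines through 0 are harmless for g \<ge> 0, and by homogeneity every other line may be taken of the
  form s \<mapsto> e + s w with e, w orthonormal, on which U restricts to the degree-1 extension of g
  along a great circle.

  If U is convex and \<psi> touches g from above at \<sigma>, convexity of U on the chord through the points
  at parameters t and -t of the geodesic with initial velocity v gives
  \<psi>(\<gamma> t) + \<psi>(\<gamma> (-t)) \<ge> 2 cos (t |v|) \<psi>(\<sigma>); its second-order term at t = 0 is
  Hess \<psi> (v, v) + \<psi>(\<sigma>) |v|\<^sup>2.

  Conversely, if U rose above a chord of s \<mapsto> U (e + s w), maximize U minus the chord plus
  \<epsilon> |y| minus a penalty M |y\<^sub>\<perp>|\<^sup>2 / |y| (y\<^sub>\<perp> the component orthogonal to e, w) over a slab of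
  the hyperplane y \<bullet> e = 1. Since g is merely continuous, the penalty is what keeps the maximum off
  the sides of the slab. By homogeneity the maximum yields the test function
  -\<epsilon> + p \<bullet> \<tau> + M |\<tau>\<^sub>\<perp>|\<^sup>2 touching g from above on the sphere, and along the great circle through
  e and w its Hess + \<psi> I is -(\<epsilon> + M |\<sigma>\<^sub>\<perp>|\<^sup>2) |v|\<^sup>2 < 0.
*)
theory Submission
  imports Defs
begin

definition homog_ext :: "('a::real_normed_vector \<Rightarrow> real) \<Rightarrow> 'a \<Rightarrow> real" where
  "homog_ext g x = norm x * g (x /\<^sub>R norm x)"

lemma homog_ext_scaleR:
  assumes "0 \<le> c"
  shows "homog_ext g (c *\<^sub>R x) = c * homog_ext g x"
proof (cases "c = 0 \<or> x = 0")
  case False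
  then have "(c *\<^sub>R x) /\<^sub>R norm (c *\<^sub>R x) = x /\<^sub>R norm x"
    using assms by (simp add: divide_inverse_commute)
  then have "homog_ext g (c *\<^sub>R x) = norm (c *\<^sub>R x) * g (x /\<^sub>R norm x)"
    by (simp only: homog_ext_def)
  then show ?thesis
    using assms by (simp add: homog_ext_def)
qed (auto simp: homog_ext_def)

lemma homog_ext_sphere: "norm x = 1 \<Longrightarrow> homog_ext g x = g x"
  by (simp add: homog_ext_def)

lemma homog_ext_nonneg:
  assumes "\<forall>\<sigma>\<in>sphere 0 1. 0 \<le> g \<sigma>"
  shows "0 \<le> homog_ext g x"
  using assms by (cases "x = 0") (simp_all add: homog_ext_def)

lemma continuous_on_homog_ext:
  assumes "continuous_on (sphere 0 1) g"
  shows "continuous_on (- {0}) (homog_ext g)"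
proof -
  have "continuous_on (- {0}) (\<lambda>x::'a. g (x /\<^sub>R norm x))"
    by (rule continuous_on_compose2[OF assms])
      (auto intro!: continuous_intros simp: divide_simps split: if_splits)
  then show ?thesis
    unfolding homog_ext_def[abs_def] by (intro continuous_intros)
qed

lemma has_real_derivative_compose_curve:
  fixes F :: "'a::real_normed_vector \<Rightarrow> real"
  assumes "(F has_derivative F') (at (\<gamma> t))" "(\<gamma> has_vector_derivative \<gamma>') (at t)"
  shows "((\<lambda>t. F (\<gamma> t)) has_real_derivative F' \<gamma>') (at t)"
proof -
  have "((\<lambda>t. F (\<gamma> t)) has_derivative (\<lambda>h. F' (h *\<^sub>R \<gamma>'))) (at t)"
    using has_derivative_compose[OF assms(2)[unfolded has_vector_derivative_def] assms(1)] .
  moreover have "F' (h *\<^sub>R \<gamma>') = h * F' \<gamma>'" for h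
    using linear_scale[OF has_derivative_linear[OF assms(1)]] by simp
  ultimately show ?thesis
    by (simp add: has_real_derivative_iff_has_vector_derivative has_vector_derivative_def)
qed

lemma has_real_derivative_blinfun_apply_curve:
  fixes D :: "'a::real_normed_vector \<Rightarrow> 'a \<Rightarrow>\<^sub>L real"
  assumes "(D has_derivative D') (at (\<gamma> t))" "(\<gamma> has_vector_derivative \<gamma>') (at t)"
    "(\<eta> has_vector_derivative \<eta>') (at t)"
  shows "((\<lambda>s. blinfun_apply (D (\<gamma> s)) (\<eta> s)) has_real_derivative
     blinfun_apply (D' \<gamma>') (\<eta> t) + blinfun_apply (D (\<gamma> t)) \<eta>') (at t)"
proof -
  have "((\<lambda>s. D (\<gamma> s)) has_derivative (\<lambda>h. D' (h *\<^sub>R \<gamma>'))) (at t)"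
    using has_derivative_compose[OF assms(2)[unfolded has_vector_derivative_def] assms(1)] .
  moreover have "D' (h *\<^sub>R \<gamma>') = h *\<^sub>R D' \<gamma>'" for h
    using linear_scale[OF has_derivative_linear[OF assms(1)]] .
  ultimately have "((\<lambda>s. D (\<gamma> s)) has_derivative (\<lambda>h. h *\<^sub>R D' \<gamma>')) (at t)"
    by simp
  from bounded_bilinear.FDERIV[OF bounded_bilinear_blinfun_apply this
      assms(3)[unfolded has_vector_derivative_def]]
  show ?thesis
    by (simp add: has_real_derivative_iff_has_vector_derivative has_vector_derivative_def
        blinfun.scaleR_right blinfun.scaleR_left algebra_simps)
qed

lemma deriv_deriv_eqI:
  assumes "\<forall>\<^sub>F t in nhds x. (f has_real_derivative f' t) (at t)"
    and "(f' has_real_derivative c) (at x)"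
  shows "deriv (deriv f) x = c"
proof -
  have "\<forall>\<^sub>F t in nhds x. deriv f t = f' t"
    using assms(1) by (rule eventually_mono) (rule DERIV_imp_deriv)
  then have "deriv (deriv f) x = deriv f' x"
    by (rule deriv_cong_ev) simp
  with assms(2) show ?thesis
    by (simp add: DERIV_imp_deriv)
qed

lemma second_derivative_nonneg_at_right_min:
  fixes h h' :: "real \<Rightarrow> real"
  assumes h: "\<forall>\<^sub>F t in nhds 0. (h has_real_derivative h' t) (at t)"
    and h': "(h' has_real_derivative c) (at 0)" "h' 0 = 0"
    and min: "\<forall>\<^sub>F t in at_right 0. h 0 \<le> h t"
  shows "0 \<le> c"
proof (rule ccontr)
  assume "\<not> 0 \<le> c"
  then obtain d where "d > 0" and h'_neg: "\<And>x. 0 < x \<Longrightarrow> x < d \<Longrightarrow> h' x < 0"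
    using DERIV_neg_dec_right[OF h'(1)] h'(2) by force
  obtain \<rho> where "\<rho> > 0" and h_deriv: "\<And>t. dist t 0 < \<rho> \<Longrightarrow> (h has_real_derivative h' t) (at t)"
    using h unfolding eventually_nhds_metric by blast
  obtain b where "b > 0" and h_min: "\<And>t. 0 < t \<Longrightarrow> t < b \<Longrightarrow> h 0 \<le> h t"
    using min unfolding eventually_at_right_field by auto
  define t where "t = min d (min \<rho> b) / 2"
  have t: "0 < t" "t < d" "t < \<rho>" "t < b"
    using \<open>d > 0\<close> \<open>\<rho> > 0\<close> \<open>b > 0\<close> by (auto simp: t_def)
  obtain z where "0 < z" "z < t" and "h t - h 0 = (t - 0) * h' z"
    using MVT2[of 0 t h h'] h_deriv t by force
  moreover have "t * h' z < 0"
    using h'_neg \<open>0 < z\<close> \<open>z < t\<close> t by (simp add: mult_pos_neg)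
  ultimately have "h t < h 0"
    by simp
  with h_min t show False
    by fastforce
qed

lemma sphere_exp_0 [simp]: "sphere_exp \<sigma> v 0 = \<sigma>"
  by (simp add: sphere_exp_def)

lemma norm_sphere_exp:
  assumes "norm \<sigma> = 1" "v \<bullet> \<sigma> = 0"
  shows "norm (sphere_exp \<sigma> v t) = 1"
proof (cases "v = 0")
  case False
  let ?u = "v /\<^sub>R norm v"
  have "\<sigma> \<bullet> v = 0"
    using assms(2) by (simp add: inner_commute)
  then have "(norm (sphere_exp \<sigma> v t))\<^sup>2
      = (cos (t * norm v))\<^sup>2 * (norm \<sigma>)\<^sup>2 + (sin (t * norm v))\<^sup>2 * (norm ?u)\<^sup>2"
    unfolding sphere_exp_def power2_norm_eq_inner
    by (simp add: inner_add_left inner_add_right assms(2) algebra_simps power2_eq_square)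
  also have "\<dots> = 1"
    using assms False by simp
  finally show ?thesis
    using norm_ge_zero[of "sphere_exp \<sigma> v t"] by (auto simp: power2_eq_1_iff)
qed (simp add: sphere_exp_def assms)

text \<open>The geodesic has velocity \<open>v\<close> and acceleration \<open>-|v|\<^sup>2 \<sigma>\<close> at \<open>t = 0\<close>.\<close>
lemma sphere_exp_second_derivative:
  fixes F \<psi> :: "'a::euclidean_space \<Rightarrow> real"
  assumes W: "open W" "\<sigma> \<in> W"
    and F: "\<forall>x\<in>W. (F has_derivative blinfun_apply (D x)) (at x)"
    and D: "\<forall>x\<in>W. (D has_derivative blinfun_apply (D2 x)) (at x)"
    and F_eq: "\<forall>x\<in>W \<inter> sphere 0 1. F x = \<psi> x"
    and \<sigma>: "norm \<sigma> = 1" and v: "v \<bullet> \<sigma> = 0"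
  obtains \<psi>' where
    "\<forall>\<^sub>F t in nhds 0. ((\<lambda>t. \<psi> (sphere_exp \<sigma> v t)) has_real_derivative \<psi>' t) (at t)"
    "(\<psi>' has_real_derivative
        blinfun_apply (blinfun_apply (D2 \<sigma>) v) v - (norm v)\<^sup>2 * blinfun_apply (D \<sigma>) \<sigma>) (at 0)"
proof -
  define \<gamma> where "\<gamma> = sphere_exp \<sigma> v"
  define \<gamma>' where
    "\<gamma>' t = (- (norm v * sin (t * norm v))) *\<^sub>R \<sigma> + (norm v * cos (t * norm v)) *\<^sub>R (v /\<^sub>R norm v)" for t
  have \<gamma>_deriv: "(\<gamma> has_vector_derivative \<gamma>' t) (at t)" for t
    unfolding \<gamma>_def \<gamma>'_def sphere_exp_def
    by (auto intro!: derivative_eq_intros simp: algebra_simps)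
  have "(\<gamma>' has_vector_derivative (- (norm v)\<^sup>2) *\<^sub>R \<sigma> + 0 *\<^sub>R (v /\<^sub>R norm v)) (at 0)"
    unfolding \<gamma>'_def by (auto intro!: derivative_eq_intros simp: power2_eq_square)
  then have \<gamma>'_deriv: "(\<gamma>' has_vector_derivative (- (norm v)\<^sup>2) *\<^sub>R \<sigma>) (at 0)"
    by simp
  have "\<gamma>' 0 = v"
    by (cases "v = 0") (simp_all add: \<gamma>'_def)
  define T where "T = \<gamma> -` W"
  have "open T"
    unfolding T_def using W(1) \<gamma>_deriv
    by (intro continuous_open_vimage has_vector_derivative_continuous)
  have "0 \<in> T"
    using W(2) by (simp add: T_def \<gamma>_def)
  define \<psi>' where "\<psi>' t = blinfun_apply (D (\<gamma> t)) (\<gamma>' t)" for t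
  have "((\<lambda>t. \<psi> (\<gamma> t)) has_real_derivative \<psi>' t) (at t)" if "t \<in> T" for t
  proof (rule has_field_derivative_transform_within_open)
    show "((\<lambda>t. F (\<gamma> t)) has_real_derivative \<psi>' t) (at t)"
      unfolding \<psi>'_def using that F \<gamma>_deriv
      by (auto simp: T_def intro: has_real_derivative_compose_curve)
    show "F (\<gamma> s) = \<psi> (\<gamma> s)" if "s \<in> T" for s
      using that F_eq norm_sphere_exp[OF \<sigma> v] by (simp add: T_def \<gamma>_def)
  qed (use \<open>open T\<close> that in auto)
  then have "\<forall>\<^sub>F t in nhds 0. ((\<lambda>t. \<psi> (\<gamma> t)) has_real_derivative \<psi>' t) (at t)"
    using eventually_nhds_in_open[OF \<open>open T\<close> \<open>0 \<in> T\<close>] by (rule eventually_mono[rotated])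
  moreover have "(\<psi>' has_real_derivative
      blinfun_apply (blinfun_apply (D2 \<sigma>) v) v - (norm v)\<^sup>2 * blinfun_apply (D \<sigma>) \<sigma>) (at 0)"
    using has_real_derivative_blinfun_apply_curve[OF _ \<gamma>_deriv \<gamma>'_deriv, of D "D2 \<sigma>"]
      D W(2) \<open>\<gamma>' 0 = v\<close>
    by (simp add: \<psi>'_def[abs_def] \<gamma>_def blinfun.scaleR_right blinfun.minus_right)
  ultimately show ?thesis
    using that by (simp add: \<gamma>_def)
qed

lemma sphere_hess_eq:
  fixes F \<psi> :: "'a::euclidean_space \<Rightarrow> real"
  assumes "open W" "\<sigma> \<in> W"
    and "\<forall>x\<in>W. (F has_derivative blinfun_apply (D x)) (at x)"
    and "\<forall>x\<in>W. (D has_derivative blinfun_apply (D2 x)) (at x)"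
    and "\<forall>x\<in>W \<inter> sphere 0 1. F x = \<psi> x"
    and "norm \<sigma> = 1" "v \<bullet> \<sigma> = 0"
  shows "sphere_hess \<psi> \<sigma> v
    = blinfun_apply (blinfun_apply (D2 \<sigma>) v) v - (norm v)\<^sup>2 * blinfun_apply (D \<sigma>) \<sigma>"
  using sphere_exp_second_derivative[OF assms] unfolding sphere_hess_def by (metis deriv_deriv_eqI)

lemma convex_homog_ext_sphere_chord:
  assumes "convex_on UNIV (homog_ext g)"
    and "norm a = 1" "norm b = 1" "norm \<sigma> = 1" "0 \<le> c" "a + b = (2 * c) *\<^sub>R \<sigma>"
  shows "2 * c * g \<sigma> \<le> g a + g b"
proof -
  have "c *\<^sub>R \<sigma> = (1 - 1/2) *\<^sub>R a + (1/2) *\<^sub>R b"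
    using assms(6) by (simp add: algebra_simps flip: scaleR_add_right)
  then have "homog_ext g (c *\<^sub>R \<sigma>) \<le> (1 - 1/2) * homog_ext g a + (1/2) * homog_ext g b"
    using convex_onD[OF assms(1), of "1/2" a b] by simp
  then show ?thesis
    using assms(2-5) by (simp add: homog_ext_scaleR homog_ext_sphere)
qed

lemma eventually_nhds_zero_mirror:
  assumes "\<forall>\<^sub>F t in nhds 0. P t"
  shows "\<forall>\<^sub>F t in nhds (0::real). P (- t)"
proof -
  have "((\<lambda>t::real. - t) \<longlongrightarrow> - 0) (nhds 0)"
    by (intro tendsto_intros filterlim_ident)
  then have "filterlim uminus (nhds 0) (nhds (0::real))"
    by simp
  from eventually_compose_filterlim[OF assms this] show ?thesis
    by simp
qed

lemma second_derivative_bound_of_cos_chord: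
  fixes \<phi> \<phi>' :: "real \<Rightarrow> real"
  assumes \<phi>: "\<forall>\<^sub>F t in nhds 0. (\<phi> has_real_derivative \<phi>' t) (at t)"
    and \<phi>': "(\<phi>' has_real_derivative c) (at 0)"
    and chord: "\<forall>\<^sub>F t in nhds 0. 2 * cos (t * k) * \<phi> 0 \<le> \<phi> t + \<phi> (- t)"
  shows "0 \<le> c + k\<^sup>2 * \<phi> 0"
proof -
  define h where "h t = \<phi> t + \<phi> (- t) - 2 * cos (t * k) * \<phi> 0" for t
  define h' where "h' t = \<phi>' t - \<phi>' (- t) + 2 * k * sin (t * k) * \<phi> 0" for t
  have \<phi>_mirror: "\<forall>\<^sub>F t in nhds 0. (\<phi> has_real_derivative \<phi>' (- t)) (at (- t))"
    using eventually_nhds_zero_mirror[OF \<phi>] .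
  have "0 \<le> c + c + 2 * k * (k * \<phi> 0)"
  proof (rule second_derivative_nonneg_at_right_min)
    show "\<forall>\<^sub>F t in nhds 0. (h has_real_derivative h' t) (at t)"
      using \<phi> \<phi>_mirror
    proof eventually_elim
      case (elim t)
      then have "((\<lambda>t. \<phi> (- t)) has_real_derivative - \<phi>' (- t)) (at t)"
        by (simp add: DERIV_mirror)
      with elim show ?case
        unfolding h_def[abs_def] h'_def
        by (auto intro!: derivative_eq_intros simp: algebra_simps)
    qed
    have "((\<lambda>t. \<phi>' (- t)) has_real_derivative - c) (at 0)"
      using \<phi>' DERIV_mirror[of \<phi>' _ 0] by simp
    then show "(h' has_real_derivative c + c + 2 * k * (k * \<phi> 0)) (at 0)"
      unfolding h'_def[abs_def] using \<phi>' by (auto intro!: derivative_eq_intros)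
    show "h' 0 = 0"
      by (simp add: h'_def)
    have "\<forall>\<^sub>F t in nhds 0. h 0 \<le> h t"
      using chord by eventually_elim (simp add: h_def)
    then show "\<forall>\<^sub>F t in at_right 0. h 0 \<le> h t"
      unfolding eventually_at_filter by (rule eventually_mono) simp
  qed
  then show ?thesis
    by (simp add: power2_eq_square)
qed

lemma viscosity_hess_plus_id_nonneg_if_convex:
  fixes g :: "'a::euclidean_space \<Rightarrow> real"
  assumes convex: "convex_on UNIV (homog_ext g)"
  shows "viscosity_hess_plus_id_nonneg g"
  unfolding viscosity_hess_plus_id_nonneg_def
proof (intro ballI allI impI)
  fix \<sigma> :: 'a and \<psi> v
  assume "\<sigma> \<in> sphere 0 1" and v: "v \<bullet> \<sigma> = 0"
    and "C2_near_on_sphere \<psi> \<sigma> \<and> (\<exists>e>0. \<forall>\<tau>\<in>sphere 0 1. dist \<tau> \<sigma> < e \<longrightarrow> g \<tau> \<le> \<psi> \<tau>) \<and> g \<sigma> = \<psi> \<sigma>"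
  then obtain e where "e > 0" and touch: "\<forall>\<tau>\<in>sphere 0 1. dist \<tau> \<sigma> < e \<longrightarrow> g \<tau> \<le> \<psi> \<tau>"
    and "g \<sigma> = \<psi> \<sigma>" and "C2_near_on_sphere \<psi> \<sigma>" and \<sigma>: "norm \<sigma> = 1"
    by auto
  then obtain W F D D2 where C2: "open W" "\<sigma> \<in> W"
    "\<forall>x\<in>W. (F has_derivative blinfun_apply (D x)) (at x)"
    "\<forall>x\<in>W. (D has_derivative blinfun_apply (D2 x)) (at x)"
    "\<forall>x\<in>W \<inter> sphere 0 1. F x = \<psi> x"
    unfolding C2_near_on_sphere_def C2_on_def by blast
  note hess = sphere_hess_eq[OF C2 \<sigma> v]
  obtain \<psi>' where \<psi>': "\<forall>\<^sub>F t in nhds 0. ((\<lambda>t. \<psi> (sphere_exp \<sigma> v t)) has_real_derivative \<psi>' t) (at t)"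
    and \<psi>'_deriv: "(\<psi>' has_real_derivative sphere_hess \<psi> \<sigma> v) (at 0)"
    using sphere_exp_second_derivative[OF C2 \<sigma> v] unfolding hess .
  have "((\<lambda>t. sphere_exp \<sigma> v t) \<longlongrightarrow> sphere_exp \<sigma> v 0) (nhds 0)"
    unfolding sphere_exp_def by (intro tendsto_intros filterlim_ident)
  then have "\<forall>\<^sub>F t in nhds 0. dist (sphere_exp \<sigma> v t) \<sigma> < e"
    using \<open>e > 0\<close> by (simp add: tendstoD)
  moreover have "((\<lambda>t. cos (t * norm v)) \<longlongrightarrow> cos (0 * norm v)) (nhds 0)"
    by (intro tendsto_intros filterlim_ident)
  then have "\<forall>\<^sub>F t in nhds 0. 0 < cos (t * norm v)"
    by (simp add: order_tendstoD(1))
  ultimately have near: "\<forall>\<^sub>F t in nhds 0. dist (sphere_exp \<sigma> v t) \<sigma> < e \<and> 0 \<le> cos (t * norm v)"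
    by eventually_elim simp
  from eventually_nhds_zero_mirror[OF near]
  have "\<forall>\<^sub>F t in nhds 0. dist (sphere_exp \<sigma> v (- t)) \<sigma> < e"
    by (rule eventually_mono) simp
  with near have "\<forall>\<^sub>F t in nhds 0.
      2 * cos (t * norm v) * \<psi> (sphere_exp \<sigma> v 0) \<le> \<psi> (sphere_exp \<sigma> v t) + \<psi> (sphere_exp \<sigma> v (- t))"
  proof eventually_elim
    case (elim t)
    have "sphere_exp \<sigma> v t + sphere_exp \<sigma> v (- t) = (2 * cos (t * norm v)) *\<^sub>R \<sigma>"
      by (simp add: sphere_exp_def algebra_simps flip: scaleR_add_left)
    then have "2 * cos (t * norm v) * g \<sigma> \<le> g (sphere_exp \<sigma> v t) + g (sphere_exp \<sigma> v (- t))"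
      using elim by (intro convex_homog_ext_sphere_chord[OF convex] norm_sphere_exp \<sigma> v) auto
    moreover have "g (sphere_exp \<sigma> v t) \<le> \<psi> (sphere_exp \<sigma> v t)"
      "g (sphere_exp \<sigma> v (- t)) \<le> \<psi> (sphere_exp \<sigma> v (- t))"
      using elim touch norm_sphere_exp[OF \<sigma> v] by simp_all
    ultimately show ?case
      using \<open>g \<sigma> = \<psi> \<sigma>\<close> by simp
  qed
  from second_derivative_bound_of_cos_chord[OF \<psi>' \<psi>'_deriv this]
  show "0 \<le> sphere_hess \<psi> \<sigma> v + \<psi> \<sigma> * (norm v)\<^sup>2"
    by (simp add: mult.commute)
qed

lemma penalized_maximizer:
  fixes f \<phi> :: "'a::topological_space \<Rightarrow> real"
  assumes "compact K" "continuous_on K f" "continuous_on K \<phi>" "\<forall>y\<in>K. 0 \<le> \<phi> y"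
    and "q0 \<in> K" "\<phi> q0 = 0" "\<eta> > 0"
  obtains M q where "0 \<le> M" "q \<in> K" "\<forall>y\<in>K. f y - M * \<phi> y \<le> f q - M * \<phi> q"
    "\<phi> q < \<eta>" "f q0 \<le> f q - M * \<phi> q"
proof -
  obtain qm where "qm \<in> K" and f_max: "\<forall>y\<in>K. f y \<le> f qm"
    using continuous_attains_sup[OF assms(1) _ assms(2)] assms(5) by blast
  define M where "M = (f qm - f q0 + 1) / \<eta>"
  have "0 \<le> M"
    using f_max assms(5,7) by (simp add: M_def)
  have "continuous_on K (\<lambda>y. f y - M * \<phi> y)"
    using assms(2,3) by (intro continuous_intros)
  then obtain q where "q \<in> K" and q_max: "\<forall>y\<in>K. f y - M * \<phi> y \<le> f q - M * \<phi> q"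
    using continuous_attains_sup[OF assms(1)] assms(5) by blast
  have "f q0 \<le> f q - M * \<phi> q"
    using q_max assms(5,6) by force
  moreover have "\<phi> q < \<eta>"
  proof (rule ccontr)
    assume "\<not> \<phi> q < \<eta>"
    then have "M * \<eta> \<le> M * \<phi> q"
      using \<open>0 \<le> M\<close> by (simp add: mult_left_mono)
    moreover have "M * \<eta> = f qm - f q0 + 1"
      using assms(7) by (simp add: M_def)
    ultimately show False
      using \<open>f q0 \<le> f q - M * \<phi> q\<close> f_max \<open>q \<in> K\<close> by force
  qed
  ultimately show ?thesis
    using that \<open>0 \<le> M\<close> \<open>q \<in> K\<close> q_max by blast
qed

lemma homogeneous_slice_max_imp_cone_bound:
  fixes \<Phi> :: "'a::real_inner \<Rightarrow> real"
  assumes hom: "\<And>c y. 0 < c \<Longrightarrow> \<Phi> (c *\<^sub>R y) = c * \<Phi> y"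
    and "open N" "q \<in> N" "q \<bullet> e = 1"
    and max: "\<And>y. y \<in> N \<Longrightarrow> y \<bullet> e = 1 \<Longrightarrow> \<Phi> y \<le> \<Phi> q"
  shows "\<forall>\<^sub>F \<tau> in nhds (q /\<^sub>R norm q). \<Phi> \<tau> \<le> \<Phi> q * (\<tau> \<bullet> e)"
proof -
  define \<sigma> where "\<sigma> = q /\<^sub>R norm q"
  have "q \<noteq> 0"
    using \<open>q \<bullet> e = 1\<close> by auto
  then have "\<sigma> \<bullet> e > 0" "\<sigma> /\<^sub>R (\<sigma> \<bullet> e) = q"
    using \<open>q \<bullet> e = 1\<close> by (simp_all add: \<sigma>_def)
  have "((\<lambda>\<tau>. \<tau> /\<^sub>R (\<tau> \<bullet> e)) \<longlongrightarrow> \<sigma> /\<^sub>R (\<sigma> \<bullet> e)) (nhds \<sigma>)"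
    using \<open>\<sigma> \<bullet> e > 0\<close> by (intro tendsto_intros filterlim_ident) auto
  then have "\<forall>\<^sub>F \<tau> in nhds \<sigma>. \<tau> /\<^sub>R (\<tau> \<bullet> e) \<in> N"
    using topological_tendstoD \<open>open N\<close> \<open>q \<in> N\<close> \<open>\<sigma> /\<^sub>R (\<sigma> \<bullet> e) = q\<close> by fastforce
  moreover have "((\<lambda>\<tau>. \<tau> \<bullet> e) \<longlongrightarrow> \<sigma> \<bullet> e) (nhds \<sigma>)"
    by (intro tendsto_intros filterlim_ident)
  then have "\<forall>\<^sub>F \<tau> in nhds \<sigma>. 0 < \<tau> \<bullet> e"
    using \<open>\<sigma> \<bullet> e > 0\<close> by (rule order_tendstoD)
  ultimately show ?thesis
    unfolding \<sigma>_def[symmetric]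
  proof eventually_elim
    case (elim \<tau>)
    then have "\<Phi> \<tau> = (\<tau> \<bullet> e) * \<Phi> (\<tau> /\<^sub>R (\<tau> \<bullet> e))"
      using hom[of "\<tau> \<bullet> e" "\<tau> /\<^sub>R (\<tau> \<bullet> e)"] by simp
    also have "\<dots> \<le> (\<tau> \<bullet> e) * \<Phi> q"
      using elim max[of "\<tau> /\<^sub>R (\<tau> \<bullet> e)"] by (simp add: mult_left_mono)
    finally show ?case
      by (simp add: mult.commute)
  qed
qed

definition perp_proj :: "'a::real_inner \<Rightarrow> 'a \<Rightarrow> 'a \<Rightarrow> 'a" where
  "perp_proj e w y = y - (y \<bullet> e) *\<^sub>R e - (y \<bullet> w) *\<^sub>R w"

definition quad_test :: "'a::real_inner \<Rightarrow> 'a \<Rightarrow> real \<Rightarrow> 'a \<Rightarrow> real \<Rightarrow> 'a \<Rightarrow> real" where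
  "quad_test e w M p c y = c + p \<bullet> y + M * (perp_proj e w y \<bullet> perp_proj e w y)"

lemma bounded_linear_perp_proj: "bounded_linear (perp_proj e w)"
  unfolding perp_proj_def by (intro bounded_linear_intros)

lemma perp_proj_scaleR: "perp_proj e w (c *\<^sub>R y) = c *\<^sub>R perp_proj e w y"
  by (simp add: perp_proj_def algebra_simps)

lemma perp_proj_decomp: "y = (y \<bullet> e) *\<^sub>R e + (y \<bullet> w) *\<^sub>R w + perp_proj e w y"
  by (simp add: perp_proj_def)

context
  fixes e w :: "'a::euclidean_space"
  assumes orthonormal: "e \<bullet> e = 1" "w \<bullet> w = 1" "e \<bullet> w = 0"
begin

lemma inner_perp_proj_perp_proj: "perp_proj e w y \<bullet> perp_proj e w h = perp_proj e w y \<bullet> h"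
  using orthonormal unfolding perp_proj_def
  by (simp add: inner_diff_left inner_diff_right inner_commute algebra_simps)

lemma perp_proj_span: "perp_proj e w (a *\<^sub>R e + b *\<^sub>R w) = 0"
  using orthonormal by (simp add: perp_proj_def inner_add_left inner_commute algebra_simps)

lemma quad_test_derivatives:
  obtains D D2 where
    "\<forall>x. (quad_test e w M p c has_derivative blinfun_apply (D x)) (at x)"
    "\<forall>x. (D has_derivative blinfun_apply (D2 x)) (at x)"
    "continuous_on UNIV D2"
    "\<forall>y h. blinfun_apply (D y) h = p \<bullet> h + 2 * M * (perp_proj e w y \<bullet> h)"
    "\<forall>y k h. blinfun_apply (blinfun_apply (D2 y) k) h = 2 * M * (perp_proj e w k \<bullet> h)"
proof -
  let ?z = "perp_proj e w"
  note lin = bounded_linear_perp_proj[of e w]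
  define D where "D y = blinfun_inner_right (p + (2 * M) *\<^sub>R ?z y)" for y
  have "bounded_linear (\<lambda>k. blinfun_inner_right ((2 * M) *\<^sub>R ?z k))"
    by (intro bounded_linear_compose[OF bounded_linear_blinfun_inner_right]
        bounded_linear_compose[OF bounded_linear_scaleR_right lin])
  then obtain B where B: "blinfun_apply B = (\<lambda>k. blinfun_inner_right ((2 * M) *\<^sub>R ?z k))"
    using bounded_linear_Blinfun_apply by blast
  have "(quad_test e w M p c has_derivative blinfun_apply (D x)) (at x)" for x
  proof -
    have dz: "(?z has_derivative ?z) (at x)"
      by (rule bounded_linear.has_derivative[OF lin has_derivative_ident])
    have "((\<lambda>y. ?z y \<bullet> ?z y) has_derivative (\<lambda>h. ?z x \<bullet> ?z h + ?z h \<bullet> ?z x)) (at x)"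
      using bounded_bilinear.FDERIV[OF bounded_bilinear_inner dz dz] .
    then have "((\<lambda>y. c + p \<bullet> y + M * (?z y \<bullet> ?z y)) has_derivative
        (\<lambda>h. 0 + p \<bullet> h + M * (?z x \<bullet> ?z h + ?z h \<bullet> ?z x))) (at x)"
      by (intro derivative_intros dz)
    then have deriv: "(quad_test e w M p c has_derivative
        (\<lambda>h. 0 + p \<bullet> h + M * (?z x \<bullet> ?z h + ?z h \<bullet> ?z x))) (at x)"
      by (simp add: quad_test_def[abs_def])
    have "?z x \<bullet> ?z h + ?z h \<bullet> ?z x = 2 * (?z x \<bullet> h)" for h
      using inner_perp_proj_perp_proj[of x h] inner_commute[of "?z h" "?z x"] by linarith
    then have "(\<lambda>h. 0 + p \<bullet> h + M * (?z x \<bullet> ?z h + ?z h \<bullet> ?z x)) = blinfun_apply (D x)"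
      by (simp add: D_def fun_eq_iff inner_add_left inner_commute[of p])
    with deriv show ?thesis
      by simp
  qed
  moreover have "(D has_derivative blinfun_apply B) (at x)" for x
  proof -
    have "(D has_derivative (\<lambda>k. blinfun_inner_right (0 + (2 * M) *\<^sub>R ?z k))) (at x)"
      unfolding D_def[abs_def]
      by (intro bounded_linear.has_derivative[OF bounded_linear_blinfun_inner_right]
          derivative_intros bounded_linear.has_derivative[OF lin] has_derivative_ident)
    then show ?thesis
      by (simp add: B)
  qed
  ultimately show ?thesis
    by (intro that[of D "\<lambda>_. B"] allI continuous_on_const)
      (simp_all add: D_def B inner_add_left algebra_simps)
qed

lemma C2_near_on_sphere_quad_test: "C2_near_on_sphere (quad_test e w M p c) \<sigma>"
proof -
  obtain D D2 where "\<forall>x. (quad_test e w M p c has_derivative blinfun_apply (D x)) (at x)"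
    "\<forall>x. (D has_derivative blinfun_apply (D2 x)) (at x)" "continuous_on UNIV D2"
    using quad_test_derivatives by metis
  then show ?thesis
    unfolding C2_near_on_sphere_def C2_on_def by blast
qed

lemma sphere_hess_quad_test:
  assumes "norm \<sigma> = 1" "v \<bullet> \<sigma> = 0"
  shows "sphere_hess (quad_test e w M p c) \<sigma> v
    = 2 * M * (perp_proj e w v \<bullet> v) - (norm v)\<^sup>2 * (p \<bullet> \<sigma> + 2 * M * (perp_proj e w \<sigma> \<bullet> \<sigma>))"
proof -
  obtain D D2 where "\<forall>x. (quad_test e w M p c has_derivative blinfun_apply (D x)) (at x)"
    "\<forall>x. (D has_derivative blinfun_apply (D2 x)) (at x)"
    "\<forall>y h. blinfun_apply (D y) h = p \<bullet> h + 2 * M * (perp_proj e w y \<bullet> h)"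
    "\<forall>y k h. blinfun_apply (blinfun_apply (D2 y) k) h = 2 * M * (perp_proj e w k \<bullet> h)"
    using quad_test_derivatives by metis
  then show ?thesis
    using sphere_hess_eq[where W = UNIV, OF open_UNIV UNIV_I _ _ _ assms] by simp
qed

lemma viscosity_excludes_quad_test_touch:
  assumes visc: "viscosity_hess_plus_id_nonneg g"
    and "\<epsilon> > 0" "M \<ge> 0" and \<sigma>: "norm \<sigma> = 1" "\<sigma> \<bullet> e \<noteq> 0" and "r > 0"
    and touch: "\<forall>\<tau>\<in>sphere 0 1. dist \<tau> \<sigma> < r \<longrightarrow> g \<tau> \<le> quad_test e w M p (- \<epsilon>) \<tau>"
    and eq: "g \<sigma> = quad_test e w M p (- \<epsilon>) \<sigma>"
  shows False
proof -
  let ?z = "perp_proj e w"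
  define v where "v = (- (\<sigma> \<bullet> w)) *\<^sub>R e + (\<sigma> \<bullet> e) *\<^sub>R w"
  have v_tangent: "v \<bullet> \<sigma> = 0"
    by (simp add: v_def inner_add_left inner_diff_right inner_commute)
  have "v \<bullet> w = \<sigma> \<bullet> e"
    using orthonormal by (simp add: v_def inner_add_left inner_diff_right inner_commute)
  then have "(norm v)\<^sup>2 > 0"
    using \<sigma>(2) by auto
  have "?z v = 0"
    unfolding v_def by (rule perp_proj_span)
  let ?\<psi> = "quad_test e w M p (- \<epsilon>)"
  have "C2_near_on_sphere ?\<psi> \<sigma> \<and> (\<exists>r>0. \<forall>\<tau>\<in>sphere 0 1. dist \<tau> \<sigma> < r \<longrightarrow> g \<tau> \<le> ?\<psi> \<tau>)
      \<and> g \<sigma> = ?\<psi> \<sigma>"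
    using C2_near_on_sphere_quad_test touch eq \<open>r > 0\<close> by blast
  with visc \<sigma>(1) v_tangent have "0 \<le> sphere_hess ?\<psi> \<sigma> v + ?\<psi> \<sigma> * (norm v)\<^sup>2"
    unfolding viscosity_hess_plus_id_nonneg_def by simp
  also have "sphere_hess ?\<psi> \<sigma> v = - (norm v)\<^sup>2 * (p \<bullet> \<sigma> + 2 * M * (?z \<sigma> \<bullet> ?z \<sigma>))"
    using \<open>?z v = 0\<close> inner_perp_proj_perp_proj[of \<sigma> \<sigma>]
    by (simp add: sphere_hess_quad_test[OF \<sigma>(1) v_tangent])
  also have "\<dots> + ?\<psi> \<sigma> * (norm v)\<^sup>2 = - ((\<epsilon> + M * (?z \<sigma> \<bullet> ?z \<sigma>)) * (norm v)\<^sup>2)"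
    by (simp add: quad_test_def algebra_simps)
  also have "\<dots> < 0"
    using \<open>\<epsilon> > 0\<close> \<open>M \<ge> 0\<close> \<open>(norm v)\<^sup>2 > 0\<close> by (simp add: add_pos_nonneg)
  finally show False
    by simp
qed

lemma penalized_homog_ext_no_slice_max:
  fixes g :: "'a \<Rightarrow> real" and p :: 'a and \<epsilon> M :: real
  defines "\<Phi> \<equiv> \<lambda>y. homog_ext g y - p \<bullet> y + \<epsilon> * norm y
    - M * (perp_proj e w y \<bullet> perp_proj e w y) / norm y"
  assumes visc: "viscosity_hess_plus_id_nonneg g" and "\<epsilon> > 0" "M \<ge> 0"
    and "open N" "q \<in> N" "q \<bullet> e = 1"
    and max: "\<And>y. y \<in> N \<Longrightarrow> y \<bullet> e = 1 \<Longrightarrow> \<Phi> y \<le> \<Phi> q"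
  shows False
proof -
  let ?z = "perp_proj e w"
  let ?\<psi> = "quad_test e w M (p + \<Phi> q *\<^sub>R e) (- \<epsilon>)"
  \<comment> \<open>By homogeneity the maximum on the slice becomes \<open>\<Phi> \<tau> \<le> \<Phi> q (\<tau> \<bullet> e)\<close> near \<open>\<sigma>\<close>,
    and on the sphere \<open>\<Phi> \<tau> - \<Phi> q (\<tau> \<bullet> e) = g \<tau> - ?\<psi> \<tau>\<close>.\<close>
  define \<sigma> where "\<sigma> = q /\<^sub>R norm q"
  have "q \<noteq> 0"
    using \<open>q \<bullet> e = 1\<close> by auto
  have hom: "\<Phi> (c *\<^sub>R y) = c * \<Phi> y" if "0 < c" for c y
  proof (cases "y = 0")
    case False
    with that show ?thesis
      by (simp add: \<Phi>_def homog_ext_scaleR perp_proj_scaleR field_simps)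
  qed (simp add: \<Phi>_def homog_ext_def perp_proj_def)
  have sphere_gap: "g \<tau> - ?\<psi> \<tau> = \<Phi> \<tau> - \<Phi> q * (\<tau> \<bullet> e)" if "norm \<tau> = 1" for \<tau>
  proof -
    have "\<Phi> \<tau> = g \<tau> - p \<bullet> \<tau> + \<epsilon> - M * (?z \<tau> \<bullet> ?z \<tau>)"
      using that by (simp add: \<Phi>_def homog_ext_sphere inner_commute)
    moreover have "(p + \<Phi> q *\<^sub>R e) \<bullet> \<tau> = p \<bullet> \<tau> + \<Phi> q * (\<tau> \<bullet> e)"
      by (simp only: inner_add_left inner_scaleR_left inner_commute[of e])
    ultimately show ?thesis
      unfolding quad_test_def by linarith
  qed
  have "\<forall>\<^sub>F \<tau> in nhds \<sigma>. \<Phi> \<tau> \<le> \<Phi> q * (\<tau> \<bullet> e)"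
    unfolding \<sigma>_def
    by (rule homogeneous_slice_max_imp_cone_bound[OF hom \<open>open N\<close> \<open>q \<in> N\<close> \<open>q \<bullet> e = 1\<close> max])
  then obtain r where "r > 0" and cone: "\<And>\<tau>. dist \<tau> \<sigma> < r \<Longrightarrow> \<Phi> \<tau> \<le> \<Phi> q * (\<tau> \<bullet> e)"
    unfolding eventually_nhds_metric by blast
  have \<sigma>: "norm \<sigma> = 1" "\<sigma> \<bullet> e = inverse (norm q)"
    using \<open>q \<noteq> 0\<close> \<open>q \<bullet> e = 1\<close> by (simp_all add: \<sigma>_def)
  show False
  proof (rule viscosity_excludes_quad_test_touch[OF visc \<open>\<epsilon> > 0\<close> \<open>M \<ge> 0\<close> \<sigma>(1) _ \<open>r > 0\<close>])
    show "\<sigma> \<bullet> e \<noteq> 0"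
      using \<sigma>(2) \<open>q \<noteq> 0\<close> by simp
    show "\<forall>\<tau>\<in>sphere 0 1. dist \<tau> \<sigma> < r \<longrightarrow> g \<tau> \<le> ?\<psi> \<tau>"
    proof (intro ballI impI)
      fix \<tau> :: 'a
      assume "\<tau> \<in> sphere 0 1" "dist \<tau> \<sigma> < r"
      then show "g \<tau> \<le> ?\<psi> \<tau>"
        using cone[of \<tau>] sphere_gap[of \<tau>] by simp
    qed
    have "\<Phi> \<sigma> = \<Phi> q * (\<sigma> \<bullet> e)"
      using hom[of "inverse (norm q)" q] \<open>q \<noteq> 0\<close> \<sigma>(2) by (simp add: \<sigma>_def)
    then show "g \<sigma> = ?\<psi> \<sigma>"
      using sphere_gap[OF \<sigma>(1)] by simp
  qed
qed

lemma inner_line_point: "(e + s *\<^sub>R w) \<bullet> e = 1" "(e + s *\<^sub>R w) \<bullet> w = s"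
  using orthonormal by (simp_all add: inner_add_left inner_commute[of w e])

lemma perp_proj_line_point: "perp_proj e w (e + s *\<^sub>R w) = 0"
  using orthonormal by (simp add: perp_proj_def inner_add_left inner_commute[of w e])

lemma norm_le_of_perp_proj_slab:
  assumes "q \<bullet> e = 1" "s0 \<le> q \<bullet> w" "q \<bullet> w \<le> s2" "norm (perp_proj e w q) \<le> \<delta>"
  shows "norm q \<le> 1 + \<bar>s0\<bar> + \<bar>s2\<bar> + \<delta>"
proof -
  have "norm e = 1" "norm w = 1"
    using orthonormal by (simp_all add: norm_eq_sqrt_inner)
  have "norm q = norm (e + (q \<bullet> w) *\<^sub>R w + perp_proj e w q)"
    using perp_proj_decomp[of q e w] assms(1) by simp
  also have "\<dots> \<le> norm e + \<bar>q \<bullet> w\<bar> * norm w + norm (perp_proj e w q)"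
    by (metis norm_scaleR norm_triangle_le norm_triangle_ineq add_right_mono)
  also have "\<dots> \<le> 1 + \<bar>s0\<bar> + \<bar>s2\<bar> + \<delta>"
    using assms \<open>norm e = 1\<close> \<open>norm w = 1\<close> by (simp add: abs_le_iff)
  finally show ?thesis .
qed

lemma compact_perp_proj_slab:
  "compact {q. q \<bullet> e = 1 \<and> s0 \<le> q \<bullet> w \<and> q \<bullet> w \<le> s2 \<and> norm (perp_proj e w q) \<le> \<delta>}"
  unfolding compact_eq_bounded_closed
proof
  show "bounded {q. q \<bullet> e = 1 \<and> s0 \<le> q \<bullet> w \<and> q \<bullet> w \<le> s2 \<and> norm (perp_proj e w q) \<le> \<delta>}"
    unfolding bounded_iff using norm_le_of_perp_proj_slab by blast
  have "continuous_on UNIV (perp_proj e w)"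
    by (rule linear_continuous_on[OF bounded_linear_perp_proj])
  then show "closed {q. q \<bullet> e = 1 \<and> s0 \<le> q \<bullet> w \<and> q \<bullet> w \<le> s2 \<and> norm (perp_proj e w q) \<le> \<delta>}"
    unfolding Collect_conj_eq
    by (intro closed_Int closed_Collect_eq closed_Collect_le continuous_intros continuous_on_norm)
qed

lemma homog_ext_upper_near_line:
  assumes "continuous_on (sphere 0 1) g" "c > 0"
  obtains \<delta> where "\<delta> > 0"
    "\<And>q. dist q (e + s *\<^sub>R w) \<le> \<delta> \<Longrightarrow> homog_ext g q < homog_ext g (e + s *\<^sub>R w) + c"
proof -
  have "(e + s *\<^sub>R w) \<bullet> e = 1"
    by (rule inner_line_point)
  then have "isCont (homog_ext g) (e + s *\<^sub>R w)"
    using continuous_on_homog_ext[OF assms(1)]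
    by (subst (asm) continuous_on_eq_continuous_at) auto
  then obtain d where "d > 0"
    and d: "\<And>q. dist q (e + s *\<^sub>R w) < d \<Longrightarrow> dist (homog_ext g q) (homog_ext g (e + s *\<^sub>R w)) < c"
    using \<open>c > 0\<close> unfolding continuous_at_eps_delta by blast
  show ?thesis
  proof (rule that[of "d / 2"])
    fix q
    assume "dist q (e + s *\<^sub>R w) \<le> d / 2"
    then show "homog_ext g q < homog_ext g (e + s *\<^sub>R w) + c"
      using d[of q] \<open>d > 0\<close> by (simp add: dist_real_def)
  qed (use \<open>d > 0\<close> in simp)
qed

lemma slab_penalized_interior_max:
  fixes f :: "'a \<Rightarrow> real" and s0 s1 s2 \<delta> :: real
  defines "K \<equiv> {q. q \<bullet> e = 1 \<and> s0 \<le> q \<bullet> w \<and> q \<bullet> w \<le> s2 \<and> norm (perp_proj e w q) \<le> \<delta>}"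
  assumes "continuous_on K f" "\<delta> > 0" "s0 < s1" "s1 < s2"
    and ends: "\<And>y. y \<in> K \<Longrightarrow> y \<bullet> w = s0 \<or> y \<bullet> w = s2 \<Longrightarrow> f y < f (e + s1 *\<^sub>R w)"
  obtains M q where "0 \<le> M" "q \<bullet> e = 1" "s0 < q \<bullet> w" "q \<bullet> w < s2" "norm (perp_proj e w q) < \<delta>"
    "\<And>y. y \<in> K \<Longrightarrow> f y - M * (perp_proj e w y \<bullet> perp_proj e w y) / norm y
      \<le> f q - M * (perp_proj e w q \<bullet> perp_proj e w q) / norm q"
proof -
  let ?z = "perp_proj e w"
  define B where "B = 1 + \<bar>s0\<bar> + \<bar>s2\<bar> + \<delta>"
  define \<phi> where "\<phi> y = ?z y \<bullet> ?z y / norm y" for y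
  have K_norm: "0 < norm y" "norm y \<le> B" if "y \<in> K" for y
    using that norm_le_of_perp_proj_slab by (auto simp: K_def B_def)
  have "B > 0"
    using \<open>\<delta> > 0\<close> by (simp add: B_def add_pos_nonneg)
  have "continuous_on K \<phi>"
    using K_norm unfolding \<phi>_def[abs_def]
    by (intro continuous_intros linear_continuous_on[OF bounded_linear_perp_proj]) auto
  have \<phi>_nonneg: "\<forall>y\<in>K. 0 \<le> \<phi> y"
    using K_norm by (simp add: \<phi>_def)
  have "e + s1 *\<^sub>R w \<in> K" "\<phi> (e + s1 *\<^sub>R w) = 0"
    using \<open>s0 < s1\<close> \<open>s1 < s2\<close> \<open>\<delta> > 0\<close>
    by (simp_all add: K_def \<phi>_def inner_line_point perp_proj_line_point)
  moreover have "\<delta>\<^sup>2 / B > 0"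
    using \<open>\<delta> > 0\<close> \<open>B > 0\<close> by simp
  ultimately obtain M q where "0 \<le> M" "q \<in> K" and q_max: "\<forall>y\<in>K. f y - M * \<phi> y \<le> f q - M * \<phi> q"
    and "\<phi> q < \<delta>\<^sup>2 / B" and "f (e + s1 *\<^sub>R w) \<le> f q - M * \<phi> q"
    by (rule penalized_maximizer[OF compact_perp_proj_slab[of s0 s2 \<delta>, folded K_def]
        \<open>continuous_on K f\<close> \<open>continuous_on K \<phi>\<close> \<phi>_nonneg])
  have "0 \<le> M * \<phi> q"
    using \<open>0 \<le> M\<close> \<phi>_nonneg \<open>q \<in> K\<close> by simp
  then have "s0 < q \<bullet> w" "q \<bullet> w < s2"
    using ends[of q] \<open>q \<in> K\<close> \<open>f (e + s1 *\<^sub>R w) \<le> f q - M * \<phi> q\<close> unfolding K_def by force+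
  moreover have "norm (?z q) < \<delta>"
  proof -
    have "?z q \<bullet> ?z q < \<delta>\<^sup>2 / B * norm q"
      using \<open>\<phi> q < \<delta>\<^sup>2 / B\<close> K_norm[OF \<open>q \<in> K\<close>] by (simp add: \<phi>_def divide_less_eq)
    also have "\<dots> \<le> \<delta>\<^sup>2"
      using K_norm[OF \<open>q \<in> K\<close>] \<open>B > 0\<close> by (simp add: field_simps mult_right_mono)
    finally have "(norm (?z q))\<^sup>2 < \<delta>\<^sup>2"
      by (simp add: power2_norm_eq_inner)
    then show ?thesis
      using \<open>\<delta> > 0\<close> by (simp add: power2_less_imp_less)
  qed
  moreover have "q \<bullet> e = 1"
    using \<open>q \<in> K\<close> by (simp add: K_def)
  ultimately show ?thesis
    using that \<open>0 \<le> M\<close> q_max by (simp add: \<phi>_def)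
qed

text \<open>The term \<open>\<epsilon> |y|\<close> makes the final test function strictly violate the viscosity inequality;
  \<open>\<epsilon>\<close> is chosen small enough not to spoil the comparison with the end faces of the slab.\<close>
lemma homog_ext_line_le_chord:
  assumes visc: "viscosity_hess_plus_id_nonneg g" and g_cont: "continuous_on (sphere 0 1) g"
    and "s0 < s1" "s1 < s2"
    and ends: "homog_ext g (e + s0 *\<^sub>R w) = \<alpha> + \<beta> * s0" "homog_ext g (e + s2 *\<^sub>R w) = \<alpha> + \<beta> * s2"
  shows "homog_ext g (e + s1 *\<^sub>R w) \<le> \<alpha> + \<beta> * s1"
proof (rule ccontr)
  let ?U = "homog_ext g" and ?z = "perp_proj e w"
  define c0 where "c0 = ?U (e + s1 *\<^sub>R w) - (\<alpha> + \<beta> * s1)"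
  assume "\<not> ?U (e + s1 *\<^sub>R w) \<le> \<alpha> + \<beta> * s1"
  then have "c0 > 0"
    by (simp add: c0_def)
  define p where "p = \<alpha> *\<^sub>R e + \<beta> *\<^sub>R w"
  have p: "p \<bullet> q = \<alpha> * (q \<bullet> e) + \<beta> * (q \<bullet> w)" for q
    by (simp only: p_def inner_add_left inner_scaleR_left inner_commute[of e q] inner_commute[of w q])
  obtain \<delta>0 \<delta>2 where "\<delta>0 > 0" "\<delta>2 > 0"
    and near_ends: "\<And>q. dist q (e + s0 *\<^sub>R w) \<le> \<delta>0 \<Longrightarrow> ?U q < ?U (e + s0 *\<^sub>R w) + c0 / 2"
      "\<And>q. dist q (e + s2 *\<^sub>R w) \<le> \<delta>2 \<Longrightarrow> ?U q < ?U (e + s2 *\<^sub>R w) + c0 / 2"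
    using homog_ext_upper_near_line[OF g_cont, of "c0 / 2"] \<open>c0 > 0\<close> by (metis half_gt_zero)
  define \<delta> where "\<delta> = min \<delta>0 \<delta>2"
  define K where "K = {q. q \<bullet> e = 1 \<and> s0 \<le> q \<bullet> w \<and> q \<bullet> w \<le> s2 \<and> norm (?z q) \<le> \<delta>}"
  define B where "B = 1 + \<bar>s0\<bar> + \<bar>s2\<bar> + \<delta>"
  have "\<delta> > 0" "B > 0"
    using \<open>\<delta>0 > 0\<close> \<open>\<delta>2 > 0\<close> by (simp_all add: \<delta>_def B_def add_pos_nonneg)
  define \<epsilon> where "\<epsilon> = c0 / (4 * B)"
  define f where "f q = ?U q - p \<bullet> q + \<epsilon> * norm q" for q
  have "K \<subseteq> - {0}"
    by (auto simp: K_def)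
  then have "continuous_on K f"
    unfolding f_def[abs_def]
    by (intro continuous_intros continuous_on_subset[OF continuous_on_homog_ext[OF g_cont]])
  have "c0 \<le> f (e + s1 *\<^sub>R w)"
    using \<open>c0 > 0\<close> \<open>B > 0\<close> by (simp add: f_def p c0_def inner_line_point \<epsilon>_def)
  moreover have "f y < c0" if "y \<in> K" "y \<bullet> w = s0 \<or> y \<bullet> w = s2" for y
  proof -
    have "y \<bullet> e = 1" "norm (?z y) \<le> \<delta>" "norm y \<le> B"
      using that(1) norm_le_of_perp_proj_slab by (simp_all add: K_def B_def)
    then have "dist y (e + (y \<bullet> w) *\<^sub>R w) \<le> \<delta>" "\<epsilon> * norm y \<le> c0 / 4"
      using \<open>c0 > 0\<close> \<open>B > 0\<close> by (simp_all add: perp_proj_def dist_norm algebra_simps \<epsilon>_def field_simps)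
    moreover from this(1) have "?U y < \<alpha> + \<beta> * (y \<bullet> w) + c0 / 2"
      using that(2) near_ends[of y] ends by (auto simp: \<delta>_def)
    ultimately show ?thesis
      using \<open>c0 > 0\<close> unfolding f_def p \<open>y \<bullet> e = 1\<close> by linarith
  qed
  ultimately obtain M q where "0 \<le> M" "q \<bullet> e = 1" "s0 < q \<bullet> w" "q \<bullet> w < s2" "norm (?z q) < \<delta>"
    and q_max: "\<And>y. y \<in> K \<Longrightarrow> f y - M * (?z y \<bullet> ?z y) / norm y \<le> f q - M * (?z q \<bullet> ?z q) / norm q"
    using slab_penalized_interior_max[OF \<open>continuous_on K f\<close>[unfolded K_def] \<open>\<delta> > 0\<close>
        \<open>s0 < s1\<close> \<open>s1 < s2\<close>, of thesis] unfolding K_def by fastforce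
  define N where "N = {y. s0 < y \<bullet> w \<and> y \<bullet> w < s2 \<and> norm (?z y) < \<delta>}"
  have "open N"
    unfolding N_def Collect_conj_eq
    by (intro open_Int open_Collect_less continuous_intros continuous_on_norm
        linear_continuous_on[OF bounded_linear_perp_proj])
  show False
  proof (rule penalized_homog_ext_no_slice_max[OF visc _ \<open>0 \<le> M\<close> \<open>open N\<close> _ \<open>q \<bullet> e = 1\<close>])
    show "\<epsilon> > 0"
      using \<open>c0 > 0\<close> \<open>B > 0\<close> by (simp add: \<epsilon>_def)
    show "q \<in> N"
      using \<open>s0 < q \<bullet> w\<close> \<open>q \<bullet> w < s2\<close> \<open>norm (?z q) < \<delta>\<close> by (simp add: N_def)
    fix y
    assume "y \<in> N" "y \<bullet> e = 1"
    then have "y \<in> K"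
      by (simp add: N_def K_def)
    then show "?U y - p \<bullet> y + \<epsilon> * norm y - M * (?z y \<bullet> ?z y) / norm y
        \<le> ?U q - p \<bullet> q + \<epsilon> * norm q - M * (?z q \<bullet> ?z q) / norm q"
      using q_max by (simp add: f_def)
  qed
qed

lemma convex_on_homog_ext_orthonormal_line:
  assumes "viscosity_hess_plus_id_nonneg g" "continuous_on (sphere 0 1) g"
  shows "convex_on UNIV (\<lambda>s. homog_ext g (e + s *\<^sub>R w))"
proof (rule convex_on_linorderI)
  fix t x y :: real
  assume "0 < t" "t < 1" "x < y"
  let ?f = "\<lambda>s. homog_ext g (e + s *\<^sub>R w)"
  define \<beta> where "\<beta> = (?f y - ?f x) / (y - x)"
  define \<alpha> where "\<alpha> = ?f x - \<beta> * x"
  have "\<beta> * (y - x) = ?f y - ?f x"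
    using \<open>x < y\<close> by (simp add: \<beta>_def)
  then have "?f x = \<alpha> + \<beta> * x" "?f y = \<alpha> + \<beta> * y"
    by (simp_all add: \<alpha>_def algebra_simps)
  moreover have "t * x < t * y" "(1 - t) * x < (1 - t) * y"
    using \<open>0 < t\<close> \<open>t < 1\<close> \<open>x < y\<close> by (simp_all add: mult_strict_left_mono)
  then have "x < (1 - t) * x + t * y" "(1 - t) * x + t * y < y"
    by (simp_all add: left_diff_distrib)
  ultimately have "?f ((1 - t) * x + t * y) \<le> \<alpha> + \<beta> * ((1 - t) * x + t * y)"
    using homog_ext_line_le_chord[OF assms] by blast
  also have "\<dots> = (1 - t) * ?f x + t * ?f y"
    using \<open>?f x = \<alpha> + \<beta> * x\<close> \<open>?f y = \<alpha> + \<beta> * y\<close> by (simp add: algebra_simps)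
  finally show "?f ((1 - t) *\<^sub>R x + t *\<^sub>R y) \<le> (1 - t) * ?f x + t * ?f y"
    by simp
qed simp

end

lemma convex_on_max:
  assumes "convex_on S f" "convex_on S g"
  shows "convex_on S (\<lambda>x. max (f x) (g x))"
proof (rule convex_onI)
  fix t :: real and x y
  assume "0 < t" "t < 1" "x \<in> S" "y \<in> S"
  then have "f ((1 - t) *\<^sub>R x + t *\<^sub>R y) \<le> (1 - t) * max (f x) (g x) + t * max (f y) (g y)"
    "g ((1 - t) *\<^sub>R x + t *\<^sub>R y) \<le> (1 - t) * max (f x) (g x) + t * max (f y) (g y)"
    using convex_onD[OF assms(1), of t x y] convex_onD[OF assms(2), of t x y]
    by (smt (verit) max.cobounded1 max.cobounded2 mult_left_mono)+
  then show "max (f ((1 - t) *\<^sub>R x + t *\<^sub>R y)) (g ((1 - t) *\<^sub>R x + t *\<^sub>R y))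
      \<le> (1 - t) * max (f x) (g x) + t * max (f y) (g y)"
    by simp
qed (use assms in \<open>simp add: convex_on_imp_convex\<close>)

lemma convex_on_linear_real: "convex_on UNIV (\<lambda>s::real. s * a)"
  by (rule convex_onI) (simp_all add: algebra_simps)

lemma convex_on_compose_affine_real:
  fixes f :: "real \<Rightarrow> real"
  assumes "convex_on UNIV f"
  shows "convex_on UNIV (\<lambda>s. f (a * s + b))"
proof (rule convex_onI)
  fix t x y :: real
  assume "0 < t" "t < 1"
  have "a * ((1 - t) *\<^sub>R x + t *\<^sub>R y) + b = (1 - t) *\<^sub>R (a * x + b) + t *\<^sub>R (a * y + b)"
    by (simp add: algebra_simps)
  then show "f (a * ((1 - t) *\<^sub>R x + t *\<^sub>R y) + b) \<le> (1 - t) * f (a * x + b) + t * f (a * y + b)"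
    using convex_onD[OF assms, of t "a * x + b" "a * y + b"] \<open>0 < t\<close> \<open>t < 1\<close> by simp
qed simp

lemma homog_ext_ray:
  assumes "\<forall>\<sigma>\<in>sphere 0 1. 0 \<le> g \<sigma>"
  shows "homog_ext g (r *\<^sub>R d) = max (r * homog_ext g d) (- r * homog_ext g (- d))"
proof (cases "0 \<le> r")
  case True
  then have "0 \<le> r * homog_ext g d" "0 \<le> r * homog_ext g (- d)"
    using homog_ext_nonneg[OF assms] by simp_all
  then show ?thesis
    using True by (simp add: homog_ext_scaleR max_absorb1)
next
  case False
  then have "r * homog_ext g d \<le> 0" "r * homog_ext g (- d) \<le> 0"
    using homog_ext_nonneg[OF assms] by (simp_all add: mult_nonpos_nonneg)
  moreover have "homog_ext g (r *\<^sub>R d) = - r * homog_ext g (- d)"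
    using False homog_ext_scaleR[of "- r" g "- d"] by simp
  ultimately show ?thesis
    by (simp add: max_absorb2)
qed

lemma convex_on_homog_ext_ray:
  assumes "\<forall>\<sigma>\<in>sphere 0 1. 0 \<le> g \<sigma>"
  shows "convex_on UNIV (\<lambda>r. homog_ext g (r *\<^sub>R d))"
  unfolding homog_ext_ray[OF assms]
  using convex_on_max[OF convex_on_linear_real[of "homog_ext g d"]
      convex_on_linear_real[of "- homog_ext g (- d)"]]
  by simp

lemma convex_on_homog_ext_line:
  fixes g :: "'a::euclidean_space \<Rightarrow> real"
  assumes visc: "viscosity_hess_plus_id_nonneg g" and g_cont: "continuous_on (sphere 0 1) g"
    and g_nonneg: "\<forall>\<sigma>\<in>sphere 0 1. 0 \<le> g \<sigma>"
  shows "convex_on UNIV (\<lambda>s. homog_ext g (x + s *\<^sub>R d))"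
proof (cases "d = 0")
  case True
  then show ?thesis
    by (simp add: convex_on_const)
next
  case False
  define \<mu> where "\<mu> = (x \<bullet> d) / (d \<bullet> d)"
  define c where "c = x - \<mu> *\<^sub>R d"
  have "c \<bullet> d = 0"
    using False by (simp add: c_def \<mu>_def inner_diff_left)
  have x: "x = c + \<mu> *\<^sub>R d"
    by (simp add: c_def)
  show ?thesis
  proof (cases "c = 0")
    case True
    then have "homog_ext g (x + s *\<^sub>R d) = homog_ext g ((1 * s + \<mu>) *\<^sub>R d)" for s
      by (simp add: x algebra_simps)
    then show ?thesis
      using convex_on_compose_affine_real[OF convex_on_homog_ext_ray[OF g_nonneg], of 1 \<mu>] by simp
  next
    case False
    define e where "e = c /\<^sub>R norm c"
    define w where "w = d /\<^sub>R norm d"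
    define a where "a = norm d / norm c"
    have ortho: "e \<bullet> e = 1" "w \<bullet> w = 1" "e \<bullet> w = 0"
      using False \<open>d \<noteq> 0\<close> \<open>c \<bullet> d = 0\<close>
      by (simp_all add: e_def w_def power2_norm_eq_inner[symmetric])
    have "x + s *\<^sub>R d = norm c *\<^sub>R (e + (a * s + a * \<mu>) *\<^sub>R w)" for s
      using False \<open>d \<noteq> 0\<close> by (simp add: x e_def w_def a_def algebra_simps)
    then have "homog_ext g (x + s *\<^sub>R d) = norm c * homog_ext g (e + (a * s + a * \<mu>) *\<^sub>R w)" for s
      by (simp add: homog_ext_scaleR)
    then show ?thesis
      using convex_on_cmul[OF norm_ge_zero convex_on_compose_affine_real[OF
            convex_on_homog_ext_orthonormal_line[OF ortho visc g_cont]], of c a "a * \<mu>"]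
      by simp
  qed
qed

lemma convex_on_UNIV_if_convex_on_lines:
  fixes f :: "'a::real_vector \<Rightarrow> real"
  assumes "\<And>x d. convex_on UNIV (\<lambda>s::real. f (x + s *\<^sub>R d))"
  shows "convex_on UNIV f"
proof (rule convex_onI)
  fix t :: real and x y :: 'a
  assume "0 < t" "t < 1"
  have "x + ((1 - t) *\<^sub>R 0 + t *\<^sub>R 1) *\<^sub>R (y - x) = (1 - t) *\<^sub>R x + t *\<^sub>R y"
    by (simp add: algebra_simps)
  then show "f ((1 - t) *\<^sub>R x + t *\<^sub>R y) \<le> (1 - t) * f x + t * f y"
    using convex_onD[OF assms[of x "y - x"], of t 0 1] \<open>0 < t\<close> \<open>t < 1\<close> by simp
qed simp

theorem proposition5p1:
  fixes g :: "'a::euclidean_space \<Rightarrow> real"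
  assumes "continuous_on (sphere 0 1) g"
    and "\<forall>\<sigma>\<in>sphere 0 1. g \<sigma> \<ge> 0"
  shows "convex_on UNIV (\<lambda>x. norm x * g (x /\<^sub>R norm x)) \<longleftrightarrow> viscosity_hess_plus_id_nonneg g"
proof
  assume "convex_on UNIV (\<lambda>x. norm x * g (x /\<^sub>R norm x))"
  then show "viscosity_hess_plus_id_nonneg g"
    by (simp add: viscosity_hess_plus_id_nonneg_if_convex homog_ext_def[abs_def])
next
  assume "viscosity_hess_plus_id_nonneg g"
  then have "convex_on UNIV (homog_ext g)"
    using convex_on_UNIV_if_convex_on_lines convex_on_homog_ext_line assms by blast
  then show "convex_on UNIV (\<lambda>x. norm x * g (x /\<^sub>R norm x))"
    by (simp add: homog_ext_def[abs_def])
qed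

end
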